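(* Let $0\le R'\le (1-p)^{|\mathcal E|}$ and let $M\ge1$ be an integer. Then, in the symmetric-erasure retransmission model described in the context, $$P\Big(\min_{v\in\mathcal V} n_v(M) < R'M\Big)\;\le\; N\,2^{-M\,D\left(R',(1-p)^{|\mathcal E|}\right)} .$$ In particular, for every $R'<(1-p)^{|\mathcal E|}$ this probability decays exponentially in $M$ (for every $p<1$).
   Context: Let $\mathcal G=(\mathcal V,\mathcal E)$ be a finite connected undirected simple graph with $N=|\mathcal V|$ vertices and maximum degree $\Delta$; $\mathcal N_v$ denotes the set of neighbours of $v$. Fix an erasure probability $p\in[0,1]$. Erasures are symmetric: for every undirected edge $e\in\mathcal E$ and every round $t\ge 1$ there is a random variable $S^e_t\in\{0,1\}$ with $P(S^e_t=1)=1-p$ ($S^e_t=1$ means the edge works in round $t$, $S^e_t=0$ means the packets in both directions on $e$ are erased in round $t$), and all these variables are mutually independent. The retransmission protocol for distributed consensus is described by integer state variables $n_{vu}(t)$, for every ordered pair $(v,u)$ with $u\in\mathcal N_v$ and every $t\ge 0$ (the index of the latest iterate of node $u$ available at node $v$ after round $t$), together with $n_v(t)=1+\min_{u\in\mathcal N_v} n_{vu}(t)$ (the number of iterations of the consensus update $x^v_{k+1}=x^v_k-\epsilon\sum_{u\in\mathcal N_v}(x^v_k-x^u_k)$ that node $v$ has completed after round $t$). Initially $n_{vu}(0)=-1$ for all such pairs (so $n_v(0)=0$), and for all $t\ge 0$ $$n_{vu}(t+1)=n_{vu}(t)+S^{\{u,v\}}_{t+1}\cdot\mathbf 1\{n_u(t)>n_{vu}(t)\}.$$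 Node $u$ is said to transmit a "wait" to node $v$ in round $t+1$ iff $n_{vu}(t)=n_u(t)$. $D(q,p)=q\log_2\frac qp+(1-q)\log_2\frac{1-q}{1-p}$ is the binary Kullback–Leibler divergence (with $0\log 0=0$). *)

theory Defs
  imports "HOL-Probability.Probability"
begin

definition simple_graph :: "'a set \<Rightarrow> 'a set set \<Rightarrow> bool" where
  "simple_graph V E \<longleftrightarrow> finite V \<and>
     (\<forall>e\<in>E. \<exists>u v. u \<in> V \<and> v \<in> V \<and> u \<noteq> v \<and> e = {u, v})"

definition connected_graph :: "'a set \<Rightarrow> 'a set set \<Rightarrow> bool" where
  "connected_graph V E \<longleftrightarrow> (\<forall>u\<in>V. \<forall>v\<in>V. (\<lambda>x y. {x, y} \<in> E)\<^sup>*\<^sup>* u v)"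

definition nbrs :: "'a set set \<Rightarrow> 'a \<Rightarrow> 'a set" where
  "nbrs E v = {u. {u, v} \<in> E}"

text \<open>Protocol state.  S e t = True means edge e works in round t.
  link_state E S t v u = n_vu(t);  node_iters E S t v = n_v(t).\<close>

fun link_state :: "'a set set \<Rightarrow> ('a set \<Rightarrow> nat \<Rightarrow> bool) \<Rightarrow> nat \<Rightarrow> 'a \<Rightarrow> 'a \<Rightarrow> int" where
  "link_state E S 0 = (\<lambda>v u. -1)"
| "link_state E S (Suc t) =
     (let n = link_state E S t;
          nd = (\<lambda>w. 1 + Min (n w ` nbrs E w))
      in (\<lambda>v u. n v u + (if S {u, v} (Suc t) \<and> nd u > n v u then 1 else 0)))"

definition node_iters :: "'a set set \<Rightarrow> ('a set \<Rightarrow> nat \<Rightarrow> bool) \<Rightarrow> nat \<Rightarrow> 'a \<Rightarrow> int" where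
  "node_iters E S t v = 1 + Min (link_state E S t v ` nbrs E v)"

text \<open>Erasure pattern for rounds 1..M: independent Bernoulli(1-p) variables S^e_t,
  e \<in> E, 1 \<le> t \<le> M (outside this index set the value is irrelevant, fixed to False).\<close>

definition erasure_pmf :: "'a set set \<Rightarrow> real \<Rightarrow> nat \<Rightarrow> ('a set \<times> nat \<Rightarrow> bool) pmf" where
  "erasure_pmf E p M = Pi_pmf (E \<times> {1..M}) False (\<lambda>_. bernoulli_pmf (1 - p))"

text \<open>Binary KL divergence (base 2), with 0 log 0 = 0 and t log(t/0) = +\<infinity> for t > 0.\<close>

definition kl_term :: "real \<Rightarrow> real \<Rightarrow> ereal" where
  "kl_term t b = (if t = 0 then 0 else if b = 0 then \<infinity> else ereal (t * log 2 (t / b)))"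

definition KL_div :: "real \<Rightarrow> real \<Rightarrow> ereal" where
  "KL_div q p = kl_term q p + kl_term (1 - q) (1 - p)"

definition pow2_neg :: "nat \<Rightarrow> ereal \<Rightarrow> real" where
  "pow2_neg M D = (if D = \<infinity> then 0 else 2 powr (- real M * real_of_ereal D))"

end

theory Submission imports Defs begin

(* Call round t "good" if every edge of the graph works in round t.
   (1) Combinatorics of the protocol: in a good round every node that has not yet
       received the current iterate of a neighbour receives it, so the minimum
       number of completed iterations over all nodes grows by at least one; since
       these counters never decrease, every node has completed at least as many
       iterations after round M as there were good rounds among 1..M.
   (2) Probability: the good-round indicators of rounds 1..M are i.i.d. Bernoulli
       with success probability q = (1-p)^|E|, so the event in the theorem is
       contained in the lower-tail event "fewer than R'M good rounds", whose
       probability the Chernoff bound (exponential Markov inequality) estimates by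
       2^(-M D(R',q)).  The factor N in the theorem is then a free weakening. *)

text \<open>The recursion for n_vu stated through n_u(t); afterwards link_state is only
  unfolded via this equation.\<close>

lemma link_state_Suc:
  "link_state E S (Suc t) v u = link_state E S t v u +
     (if S {u, v} (Suc t) \<and> node_iters E S t u > link_state E S t v u then 1 else 0)"
  by (simp add: Let_def node_iters_def)

declare link_state.simps(2)[simp del]

lemma link_state_mono_Suc: "link_state E S t v u \<le> link_state E S (Suc t) v u"
  by (simp add: link_state_Suc)

lemma node_iters_ge:
  assumes "finite (nbrs E v)" "nbrs E v \<noteq> {}"
    and "\<And>u. u \<in> nbrs E v \<Longrightarrow> m \<le> link_state E S t v u"
  shows "1 + m \<le> node_iters E S t v"
  unfolding node_iters_def using assms by simp

lemma node_iters_le: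
  assumes "finite (nbrs E v)" "u \<in> nbrs E v"
  shows "node_iters E S t v \<le> 1 + link_state E S t v u"
  unfolding node_iters_def using assms by simp

lemma node_iters_mono_Suc:
  assumes "finite (nbrs E v)" "nbrs E v \<noteq> {}"
  shows "node_iters E S t v \<le> node_iters E S (Suc t) v"
proof -
  have "Min (link_state E S t v ` nbrs E v) \<le> link_state E S (Suc t) v u"
    if "u \<in> nbrs E v" for u
    using assms that link_state_mono_Suc[of E S t v u] by (meson Min_le finite_imageI image_eqI order_trans)
  thus ?thesis
    using node_iters_ge[OF assms] unfolding node_iters_def by blast
qed

definition good_rounds :: "'a set set \<Rightarrow> ('a set \<Rightarrow> nat \<Rightarrow> bool) \<Rightarrow> nat \<Rightarrow> nat set" where
  "good_rounds E S t = {s \<in> {1..t}. \<forall>e\<in>E. S e s}"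

locale protocol_graph =
  fixes V :: "'a set" and E :: "'a set set"
  assumes finite_nbrs: "\<And>v. v \<in> V \<Longrightarrow> finite (nbrs E v)"
    and nbrs_nonempty: "\<And>v. v \<in> V \<Longrightarrow> nbrs E v \<noteq> {}"
    and nbrs_closed: "\<And>v u. v \<in> V \<Longrightarrow> u \<in> nbrs E v \<Longrightarrow> u \<in> V"
begin

text \<open>In a good round, a lower bound m on all n_w(t) improves to m + 1 at every node:
  a counter n_vu either is already at least n_u(t) \<ge> m, or it is incremented from a
  value that is at least n_v(t) - 1 \<ge> m - 1.\<close>

lemma good_round_step:
  assumes v: "v \<in> V" and good: "\<And>e. e \<in> E \<Longrightarrow> S e (Suc t)"
    and m: "\<And>w. w \<in> V \<Longrightarrow> m \<le> node_iters E S t w"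
  shows "1 + m \<le> node_iters E S (Suc t) v"
proof (rule node_iters_ge[OF finite_nbrs[OF v] nbrs_nonempty[OF v]])
  fix u assume u: "u \<in> nbrs E v"
  have works: "S {u, v} (Suc t)" using good u by (simp add: nbrs_def)
  show "m \<le> link_state E S (Suc t) v u"
  proof (cases "node_iters E S t u > link_state E S t v u")
    case True
    have "m \<le> node_iters E S t v" using m v .
    also have "\<dots> \<le> 1 + link_state E S t v u" using node_iters_le[OF finite_nbrs[OF v] u] .
    finally show ?thesis using True works by (simp add: link_state_Suc)
  next
    case False
    have "m \<le> node_iters E S t u" using m nbrs_closed[OF v u] .
    thus ?thesis using False by (simp add: link_state_Suc)
  qed
qed

lemma node_iters_ge_good_rounds:
  "v \<in> V \<Longrightarrow> int (card (good_rounds E S t)) \<le> node_iters E S t v"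
proof (induction t arbitrary: v)
  case 0
  show ?case
    using node_iters_ge[OF finite_nbrs[OF 0] nbrs_nonempty[OF 0], of "-1"]
    by (simp add: good_rounds_def)
next
  case (Suc t)
  show ?case
  proof (cases "\<forall>e\<in>E. S e (Suc t)")
    case True
    hence "good_rounds E S (Suc t) = insert (Suc t) (good_rounds E S t)"
      by (auto simp: good_rounds_def)
    hence "card (good_rounds E S (Suc t)) = Suc (card (good_rounds E S t))"
      by (simp add: good_rounds_def)
    moreover have "1 + int (card (good_rounds E S t)) \<le> node_iters E S (Suc t) v"
      using good_round_step[OF Suc.prems] True Suc.IH by blast
    ultimately show ?thesis by simp
  next
    case False
    hence "good_rounds E S (Suc t) = good_rounds E S t"
      by (auto simp: good_rounds_def le_Suc_eq)
    moreover have "node_iters E S t v \<le> node_iters E S (Suc t) v"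
      using node_iters_mono_Suc[OF finite_nbrs[OF Suc.prems] nbrs_nonempty[OF Suc.prems]] .
    ultimately show ?thesis using Suc.IH[OF Suc.prems] by simp
  qed
qed

lemma few_iters_imp_few_good_rounds:
  "{\<omega>. \<exists>v\<in>V. real_of_int (node_iters E (\<lambda>e t. \<omega> (e, t)) M v) < x}
   \<subseteq> (\<lambda>\<omega> t. \<forall>e\<in>E. \<omega> (e, t)) -` {f. real (card {t\<in>{1..M}. f t}) < x}"
proof
  fix \<omega> assume "\<omega> \<in> {\<omega>. \<exists>v\<in>V. real_of_int (node_iters E (\<lambda>e t. \<omega> (e, t)) M v) < x}"
  then obtain v where v: "v \<in> V" and few: "real_of_int (node_iters E (\<lambda>e t. \<omega> (e, t)) M v) < x"
    by blast
  have "int (card (good_rounds E (\<lambda>e t. \<omega> (e, t)) M)) \<le> node_iters E (\<lambda>e t. \<omega> (e, t)) M v"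
    using node_iters_ge_good_rounds[OF v] .
  thus "\<omega> \<in> (\<lambda>\<omega> t. \<forall>e\<in>E. \<omega> (e, t)) -` {f. real (card {t\<in>{1..M}. f t}) < x}"
    using few unfolding good_rounds_def by simp
qed

end

lemma simple_graph_edge_subset:
  assumes "simple_graph V E" "e \<in> E"
  shows "e \<subseteq> V"
proof -
  obtain a b where "a \<in> V" "b \<in> V" "e = {a, b}" using assms unfolding simple_graph_def by blast
  thus ?thesis by simp
qed

lemma connected_graph_has_neighbour:
  assumes conn: "connected_graph V E" and two: "card V \<ge> 2" and v: "v \<in> V"
  shows "nbrs E v \<noteq> {}"
proof -
  have "\<not> V \<subseteq> {v}"
  proof
    assume "V \<subseteq> {v}"
    hence "card V \<le> card {v}" by (intro card_mono) auto
    thus False using two by simp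
  qed
  then obtain w where w: "w \<in> V" "w \<noteq> v" by blast
  have "(\<lambda>x y. {x, y} \<in> E)\<^sup>*\<^sup>* v w" using conn v w unfolding connected_graph_def by blast
  then obtain y where "{v, y} \<in> E"
    using w(2) by (cases rule: converse_rtranclpE) auto
  hence "y \<in> nbrs E v" by (simp add: nbrs_def insert_commute)
  thus ?thesis by blast
qed

lemma simple_connected_graph_facts:
  assumes simple: "simple_graph V E" and conn: "connected_graph V E" and two: "card V \<ge> 2"
  shows "protocol_graph V E" and "finite E" and "E \<noteq> {}"
proof -
  have fin: "finite V" using simple by (simp add: simple_graph_def)
  have closed: "u \<in> V" if "u \<in> nbrs E v" for u v
    using simple_graph_edge_subset[OF simple] that by (auto simp: nbrs_def)
  show "protocol_graph V E"
  proof
    fix v assume v: "v \<in> V"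
    have "nbrs E v \<subseteq> V" using closed by blast
    thus "finite (nbrs E v)" using fin by (rule finite_subset)
    show "nbrs E v \<noteq> {}" using connected_graph_has_neighbour[OF conn two v] .
  next
    fix v u assume "u \<in> nbrs E v"
    thus "u \<in> V" by (rule closed)
  qed
  have "E \<subseteq> Pow V" using simple_graph_edge_subset[OF simple] by blast
  thus "finite E" using fin by (simp add: finite_subset)
  have "V \<noteq> {}" using two by auto
  then obtain v where "v \<in> V" by blast
  thus "E \<noteq> {}" using connected_graph_has_neighbour[OF conn two] by (auto simp: nbrs_def)
qed

lemma Pi_pmf_curry:
  assumes A: "finite A" and B: "finite B"
  shows "Pi_pmf (A \<times> B) d (\<lambda>_. P) =
         map_pmf (\<lambda>H (a, b). H b a) (Pi_pmf B (\<lambda>_. d) (\<lambda>_. Pi_pmf A d (\<lambda>_. P)))"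
proof (rule pmf_eqI)
  fix \<omega> :: "'a \<times> 'b \<Rightarrow> 'c"
  let ?c = "\<lambda>H (a, b). H b a" and ?Q = "Pi_pmf B (\<lambda>_. d) (\<lambda>_. Pi_pmf A d (\<lambda>_. P))"
  have inj: "inj (?c :: ('b \<Rightarrow> 'a \<Rightarrow> 'c) \<Rightarrow> _)"
    by (rule injI) (metis case_prod_conv ext)
  have "pmf (map_pmf ?c ?Q) \<omega> = pmf ?Q (\<lambda>b a. \<omega> (a, b))"
    using pmf_map_inj'[OF inj, of ?Q "\<lambda>b a. \<omega> (a, b)"] by simp
  also have "\<dots> = pmf (Pi_pmf (A \<times> B) d (\<lambda>_. P)) \<omega>"
  proof (cases "\<forall>x. x \<notin> A \<times> B \<longrightarrow> \<omega> x = d")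
    case True
    have "pmf ?Q (\<lambda>b a. \<omega> (a, b)) = (\<Prod>b\<in>B. pmf (Pi_pmf A d (\<lambda>_. P)) (\<lambda>a. \<omega> (a, b)))"
      using True B by (subst pmf_Pi) (auto simp: fun_eq_iff)
    also have "\<dots> = (\<Prod>b\<in>B. \<Prod>a\<in>A. pmf P (\<omega> (a, b)))"
      using True A by (intro prod.cong refl, subst pmf_Pi) auto
    also have "\<dots> = (\<Prod>x\<in>A \<times> B. pmf P (\<omega> x))"
      by (subst prod.swap) (simp add: prod.cartesian_product)
    finally show ?thesis using True A B by (subst pmf_Pi) auto
  next
    case False
    then obtain a b where ab: "(a, b) \<notin> A \<times> B" "\<omega> (a, b) \<noteq> d" by auto
    have "pmf ?Q (\<lambda>b a. \<omega> (a, b)) = 0"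
    proof (cases "b \<in> B")
      case False
      thus ?thesis using ab B by (subst pmf_Pi) (auto simp: fun_eq_iff)
    next
      case True
      hence "pmf (Pi_pmf A d (\<lambda>_. P)) (\<lambda>a. \<omega> (a, b)) = 0" using ab A by (subst pmf_Pi) auto
      thus ?thesis using True B by (subst pmf_Pi) auto
    qed
    moreover have "pmf (Pi_pmf (A \<times> B) d (\<lambda>_. P)) \<omega> = 0"
      using False A B by (subst pmf_Pi) auto
    ultimately show ?thesis by simp
  qed
  finally show "pmf (Pi_pmf (A \<times> B) d (\<lambda>_. P)) \<omega> = pmf (map_pmf ?c ?Q) \<omega>" by simp
qed

definition round_ok_pmf :: "'a set set \<Rightarrow> real \<Rightarrow> bool pmf" where
  "round_ok_pmf E p = map_pmf (\<lambda>f. \<forall>e\<in>E. f e) (Pi_pmf E False (\<lambda>_. bernoulli_pmf (1 - p)))"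

lemma pmf_round_ok_True:
  assumes "finite E" "0 \<le> p" "p \<le> 1"
  shows "pmf (round_ok_pmf E p) True = (1 - p) ^ card E"
proof -
  have "{f. \<forall>e\<in>E. f e} = Pi E (\<lambda>_. {True})" by (auto simp: Pi_def)
  hence "pmf (round_ok_pmf E p) True
      = measure_pmf.prob (Pi_pmf E False (\<lambda>_. bernoulli_pmf (1 - p))) (Pi E (\<lambda>_. {True}))"
    by (simp add: round_ok_pmf_def pmf_map vimage_def)
  also have "\<dots> = (1 - p) ^ card E"
    using assms by (simp add: measure_Pi_pmf_Pi measure_pmf_single)
  finally show ?thesis .
qed

lemma good_round_indicators_iid:
  assumes E: "finite E" "E \<noteq> {}"
  shows "map_pmf (\<lambda>\<omega> t. \<forall>e\<in>E. \<omega> (e, t)) (erasure_pmf E p M) =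
         Pi_pmf {1..M} False (\<lambda>_. round_ok_pmf E p)"
proof -
  let ?edges = "Pi_pmf E False (\<lambda>_. bernoulli_pmf (1 - p))"
  have "map_pmf (\<lambda>\<omega> t. \<forall>e\<in>E. \<omega> (e, t)) (erasure_pmf E p M)
      = map_pmf (\<lambda>H. (\<lambda>f. \<forall>e\<in>E. f e) \<circ> H) (Pi_pmf {1..M} (\<lambda>_. False) (\<lambda>_. ?edges))"
    unfolding erasure_pmf_def using E(1)
    by (simp add: Pi_pmf_curry pmf.map_comp comp_def)
  also have "\<dots> = Pi_pmf {1..M} False (\<lambda>_. round_ok_pmf E p)"
    unfolding round_ok_pmf_def using E by (subst Pi_pmf_map) auto
  finally show ?thesis .
qed

lemma pow2_neg_KL_div_interior:
  assumes r: "0 < r" "r < 1" and q: "0 < q" "q < 1"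
  shows "pow2_neg M (KL_div r q) =
         (r / q) powr (- r * M) * ((1 - r) / (1 - q)) powr (- (1 - r) * M)"
proof -
  define a b where "a = r / q" and "b = (1 - r) / (1 - q)"
  have ab: "0 < a" "0 < b" using r q unfolding a_def b_def by auto
  have "KL_div r q = ereal (r * log 2 a + (1 - r) * log 2 b)"
    using r q by (simp add: KL_div_def kl_term_def a_def b_def)
  hence "pow2_neg M (KL_div r q) = 2 powr (log 2 a * (- r * M) + log 2 b * (- (1 - r) * M))"
    by (simp add: pow2_neg_def algebra_simps)
  also have "\<dots> = (2 powr log 2 a) powr (- r * M) * (2 powr log 2 b) powr (- (1 - r) * M)"
    by (simp only: powr_add powr_powr)
  also have "\<dots> = a powr (- r * M) * b powr (- (1 - r) * M)"
    using ab by simp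
  finally show ?thesis by (simp add: a_def b_def)
qed

text \<open>Products of Boolean distributions over a finite index set have finite support,
  so all expectations below are finite sums.\<close>

lemma finite_set_Pi_pmf_bool:
  "finite T \<Longrightarrow> finite (set_pmf (Pi_pmf T dflt (D :: 'b \<Rightarrow> bool pmf)))"
  by (rule finite_subset[OF set_Pi_pmf_subset']) auto

lemma prob_le_expectation:
  fixes P :: "'c pmf"
  assumes "finite (set_pmf P)" "\<And>x. x \<in> A \<Longrightarrow> 1 \<le> g x" "\<And>x. 0 \<le> g x"
  shows "measure_pmf.prob P A \<le> measure_pmf.expectation P g"
proof -
  have "measure_pmf.prob P A = measure_pmf.expectation P (indicator A)"
    by simp
  also have "\<dots> \<le> measure_pmf.expectation P g"
    by (intro integral_mono integrable_measure_pmf_finite assms)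
       (auto simp: indicator_def assms)
  finally show ?thesis .
qed

text \<open>Chernoff lower-tail bound for i.i.d. Boolean variables with success probability q:
  Markov's inequality applied to l^(#successes - rM) with the optimal tilt
  l = (r/q)/((1-r)/(1-q)) \<le> 1, whose expectation factorises over the independent rounds.\<close>

lemma bernoulli_lower_tail_chernoff:
  fixes D :: "bool pmf" and T :: "'b set"
  assumes T: "finite T" and q: "pmf D True = q" and r: "0 < r" "r < 1" "r \<le> q" "q < 1"
  defines "M \<equiv> real (card T)"
  shows "measure_pmf.prob (Pi_pmf T False (\<lambda>_. D)) {f. real (card {t\<in>T. f t}) < r * M}
         \<le> (r / q) powr (- r * M) * ((1 - r) / (1 - q)) powr (- (1 - r) * M)"
proof -
  define a b where "a = r / q" and "b = (1 - r) / (1 - q)"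
  define l where "l = a / b"
  have ab: "0 < a" "0 < b" using r unfolding a_def b_def by auto
  have l: "0 < l" "l \<le> 1"
    using r ab unfolding l_def a_def b_def by (auto simp: field_simps mult_mono)
  define h where "h x = (if x then l else 1)" for x
  let ?P = "Pi_pmf T False (\<lambda>_. D)"
  let ?g = "\<lambda>f. l powr (- r * M) * (\<Prod>t\<in>T. h (f t))"
  have tilt: "?g f = l powr (real (card {t\<in>T. f t}) - r * M)" for f
  proof -
    have "(\<Prod>t\<in>T. h (f t)) = l ^ card {t\<in>T. f t}"
      unfolding h_def using T by (simp add: prod.If_cases Int_def)
    thus ?thesis using l by (simp add: powr_diff powr_realpow powr_minus divide_inverse)
  qed
  have "measure_pmf.prob ?P {f. real (card {t\<in>T. f t}) < r * M} \<le> measure_pmf.expectation ?P ?g"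
  proof (rule prob_le_expectation)
    fix f assume "f \<in> {f. real (card {t\<in>T. f t}) < r * M}"
    hence "1 \<le> (1 / l) powr (r * M - real (card {t\<in>T. f t}))"
      using l by (intro ge_one_powr_ge_zero) auto
    also have "(1 / l) powr (r * M - real (card {t\<in>T. f t})) = ?g f"
      unfolding tilt using l
      by (simp add: powr_divide flip: powr_minus_divide)
    finally show "1 \<le> ?g f" .
  next
    show "finite (set_pmf ?P)" using T by (rule finite_set_Pi_pmf_bool)
  next
    show "0 \<le> ?g f" for f unfolding tilt by simp
  qed
  also have "measure_pmf.expectation ?P ?g
      = l powr (- r * M) * (\<Prod>t\<in>T. measure_pmf.expectation D h)"
    by (simp, subst expectation_prod_Pi_pmf)
       (use T l in \<open>auto intro: integrable_measure_pmf_finite simp: h_def\<close>)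
  also have "measure_pmf.expectation D h = 1 / b"
    using r ab unfolding h_def l_def a_def b_def
    by (subst integral_measure_pmf_real[where A = UNIV])
       (auto simp: q pmf_False_conv_True UNIV_bool field_simps)
  also have "l powr (- r * M) * (\<Prod>t\<in>T. 1 / b) = a powr (- r * M) * b powr (- (1 - r) * M)"
  proof -
    have "(\<Prod>t\<in>T. 1 / b) = b powr (- M)"
      using ab by (simp add: M_def powr_minus_divide powr_realpow power_one_over)
    moreover have "l powr (- r * M) = a powr (- r * M) * b powr (r * M)"
      using ab by (simp add: l_def powr_divide powr_minus_divide)
    moreover have "b powr (r * M) * b powr (- M) = b powr (- (1 - r) * M)"
      by (simp add: algebra_simps flip: powr_add)
    ultimately show ?thesis by simp
  qed
  finally show ?thesis by (simp add: a_def b_def)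
qed

text \<open>The same bound in KL form, valid for all 0 \<le> r \<le> q including the degenerate
  cases r = 0 (empty event), r = q = 1 (zero divergence) and q = 1 (no failures).\<close>

lemma bernoulli_lower_tail_KL:
  fixes D :: "bool pmf" and T :: "'b set"
  assumes T: "finite T" and q: "pmf D True = q" and r: "0 \<le> r" "r \<le> q"
  shows "measure_pmf.prob (Pi_pmf T False (\<lambda>_. D)) {f. real (card {t\<in>T. f t}) < r * card T}
         \<le> pow2_neg (card T) (KL_div r q)"
proof -
  let ?P = "Pi_pmf T False (\<lambda>_. D)" and ?B = "{f. real (card {t\<in>T. f t}) < r * card T}"
  have q1: "q \<le> 1" using q pmf_le_1 by metis
  consider "r = 0" | "r = 1" | "0 < r" "r < 1" "q = 1" | "0 < r" "r < 1" "q < 1"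
    using r q1 by linarith
  thus ?thesis
  proof cases
    case 1
    hence "?B = {}" by auto
    thus ?thesis by (simp add: pow2_neg_def)
  next
    case 2
    hence "KL_div r q = 0" using r q1 by (simp add: KL_div_def kl_term_def)
    thus ?thesis by (simp add: pow2_neg_def)
  next
    case 3
    have "D = return_pmf True"
      by (rule pmf_eqI) (use 3 q in \<open>auto simp: pmf_False_conv_True[of D] split: split_indicator\<close>)
    hence "?P = return_pmf (\<lambda>t. t \<in> T)" using T by simp
    moreover have "(\<lambda>t. t \<in> T) \<notin> ?B"
      using 3 mult_left_le_one_le[of "real (card T)" r] by simp
    ultimately have "measure_pmf.prob ?P ?B = 0" by simp
    thus ?thesis by (simp add: pow2_neg_def)
  next
    case 4
    have "0 < q" using 4 r by linarith
    show ?thesis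
      using bernoulli_lower_tail_chernoff[OF T q 4(1,2) r(2) 4(3)]
        pow2_neg_KL_div_interior[OF 4(1,2) \<open>0 < q\<close> 4(3), of "card T"]
      by simp
  qed
qed

theorem theorem2:
  fixes V :: "'a set" and E :: "'a set set" and p R' :: real and M :: nat
  assumes "simple_graph V E" and "connected_graph V E" and "card V \<ge> 2"
    and "0 \<le> p" and "p \<le> 1"
    and "0 \<le> R'" and "R' \<le> (1 - p) ^ card E"
    and "M \<ge> 1"
  shows "measure_pmf.prob (erasure_pmf E p M)
           {\<omega>. \<exists>v\<in>V. real_of_int (node_iters E (\<lambda>e t. \<omega> (e, t)) M v) < R' * real M}
         \<le> real (card V) * pow2_neg M (KL_div R' ((1 - p) ^ card E))"
proof -
  note graph = simple_connected_graph_facts[OF assms(1-3)]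
  interpret protocol_graph V E by (rule graph(1))
  let ?bound = "pow2_neg M (KL_div R' ((1 - p) ^ card E))"
  let ?tail = "{f. real (card {t\<in>{1..M}. f t}) < R' * real M}"
  have "measure_pmf.prob (erasure_pmf E p M)
          {\<omega>. \<exists>v\<in>V. real_of_int (node_iters E (\<lambda>e t. \<omega> (e, t)) M v) < R' * real M}
        \<le> measure_pmf.prob (erasure_pmf E p M) ((\<lambda>\<omega> t. \<forall>e\<in>E. \<omega> (e, t)) -` ?tail)"
    by (intro measure_pmf.finite_measure_mono few_iters_imp_few_good_rounds) simp
  also have "\<dots> = measure_pmf.prob (Pi_pmf {1..M} False (\<lambda>_. round_ok_pmf E p)) ?tail"
    by (simp only: good_round_indicators_iid[OF graph(2,3), symmetric] measure_map_pmf)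
  also have "\<dots> \<le> ?bound"
    using bernoulli_lower_tail_KL[OF _ pmf_round_ok_True[OF graph(2) assms(4,5)] assms(6,7), of "{1..M}"]
    by simp
  also have "\<dots> \<le> real (card V) * ?bound"
    using assms(3) by (simp add: pow2_neg_def mult_le_cancel_right1)
  finally show ?thesis .
qed

end
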